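(* Let $R$ be a Noetherian ring (in particular, $R=S=K[x_1,\dots,x_n]$ with $I$ homogeneous), $I\subset R$ an ideal generated by $f_1,\dots,f_m$, and $s,t\in\mathbb{N}$. Then $$Z_s(I,Z_t(I,R))=Z_t(I,Z_s(I,R)),$$ where both sides are regarded as subsets of $\bigwedge^s F\otimes_R \bigwedge^t F$ (the right-hand side via the canonical identification $\bigwedge^t F\otimes\bigwedge^s F\cong \bigwedge^s F\otimes\bigwedge^t F$).
   Context: $F=R^m$ with basis $e_1,\dots,e_m$ and $\phi:F\to R$, $\phi(e_i)=f_i$. The Koszul complex $K(I,R)=\bigwedge^\bullet F$ has differential induced by $\phi$; for an $R$-module $N$, $K(I,N)=\bigwedge^\bullet F\otimes_R N$ with differential $\phi\otimes \mathrm{id}_N$, and $Z_t(I,N)$ denotes its module of cycles in homological position $t$. Since $Z_t(I,R)\subset\bigwedge^t F$ and $\bigwedge^s F$ is free, $Z_s(I,Z_t(I,R))\subset \bigwedge^s F\otimes Z_t(I,R)\subset \bigwedge^s F\otimes\bigwedge^t F$, and similarly for the other side. *)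

theory Defs
  imports Main "HOL-Library.Function_Algebras"
begin

definition is_ideal :: "'a::comm_ring_1 set \<Rightarrow> bool" where
  "is_ideal I \<longleftrightarrow> 0 \<in> I \<and> (\<forall>x\<in>I. \<forall>y\<in>I. x + y \<in> I) \<and> (\<forall>r x. x \<in> I \<longrightarrow> r * x \<in> I)"

definition noetherian_ring :: "'a::comm_ring_1 itself \<Rightarrow> bool" where
  "noetherian_ring _ \<longleftrightarrow>
     (\<forall>C :: nat \<Rightarrow> 'a set. (\<forall>n. is_ideal (C n)) \<and> (\<forall>n. C n \<subseteq> C (Suc n))
        \<longrightarrow> (\<exists>N. \<forall>n\<ge>N. C n = C N))"

text \<open>
  F = R^m with basis e_0..e_{m-1}; \<And>^s F is free with basis e_S, S an s-subset of {..<m}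
  (e_S = e_{i_1} \<and> ... \<and> e_{i_s}, i_1 < ... < i_s).  An element of \<And>^s F \<otimes> N is
  represented by its coefficient function S \<mapsto> x S \<in> N, zero outside s-subsets of {..<m}.
  The module N is a subset of an additive group 'b with scalar action sc : 'a \<Rightarrow> 'b \<Rightarrow> 'b.
\<close>

definition koszul_chains :: "nat \<Rightarrow> nat \<Rightarrow> 'b::zero set \<Rightarrow> (nat set \<Rightarrow> 'b) set" where
  "koszul_chains m s N =
     {x. (\<forall>S. x S \<in> N) \<and> (\<forall>S. \<not> (S \<subseteq> {..<m} \<and> card S = s) \<longrightarrow> x S = 0)}"

text \<open>Differential: d(e_T \<otimes> n) = \<Sum>_{j\<in>T} (-1)^{#\{i\<in>T. i<j\}} e_{T-\{j\}} \<otimes> f_j n.\<close>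
definition koszul_d :: "nat \<Rightarrow> (nat \<Rightarrow> 'a::comm_ring_1) \<Rightarrow> ('a \<Rightarrow> 'b::ab_group_add \<Rightarrow> 'b)
    \<Rightarrow> (nat set \<Rightarrow> 'b) \<Rightarrow> (nat set \<Rightarrow> 'b)" where
  "koszul_d m f sc x = (\<lambda>U. \<Sum>j\<in>{..<m} - U. sc ((-1) ^ card {i\<in>U. i < j} * f j) (x (insert j U)))"

definition koszul_cycles :: "nat \<Rightarrow> (nat \<Rightarrow> 'a::comm_ring_1) \<Rightarrow> ('a \<Rightarrow> 'b::ab_group_add \<Rightarrow> 'b)
    \<Rightarrow> nat \<Rightarrow> 'b set \<Rightarrow> (nat set \<Rightarrow> 'b) set" where
  "koszul_cycles m f sc s N = {x \<in> koszul_chains m s N. koszul_d m f sc x = 0}"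

definition Z_R :: "nat \<Rightarrow> (nat \<Rightarrow> 'a::comm_ring_1) \<Rightarrow> nat \<Rightarrow> (nat set \<Rightarrow> 'a) set" where
  "Z_R m f t = koszul_cycles m f (*) t UNIV"

text \<open>Z_s(I, Z_t(I,R)) \<subseteq> \<And>^s F \<otimes> \<And>^t F, represented as x S T; the scalar action
  on \<And>^t F is coefficientwise.\<close>
definition Z_Z :: "nat \<Rightarrow> (nat \<Rightarrow> 'a::comm_ring_1) \<Rightarrow> nat \<Rightarrow> nat \<Rightarrow> (nat set \<Rightarrow> nat set \<Rightarrow> 'a) set" where
  "Z_Z m f s t = koszul_cycles m f (\<lambda>r y. \<lambda>T. r * y T) s (Z_R m f t)"

end

theory Submission
  imports Defs
begin

text \<open>
  The differential of K(I, \<And>^t F) acts on the first tensor factor of \<And>^s F \<otimes> \<And>^t F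
  coefficientwise in the second. Hence x lies in Z_s(I, Z_t(I,R)) exactly when every column
  x(-, T) is a cycle of K(I,R) in position s and every row x(S, -) is a cycle in position t.
  This description is symmetric in the two factors, so transposition exchanges the two sides.
\<close>

lemma sum_apply: "finite A \<Longrightarrow> (\<Sum>j\<in>A. g j) T = (\<Sum>j\<in>A. g j T)"
  by (induction A rule: finite_induct) auto

lemma koszul_d_coefficientwise:
  "koszul_d m f (\<lambda>r y T. r * y T) x = (\<lambda>U T. koszul_d m f (*) (\<lambda>S. x S T) U)"
  by (simp add: koszul_d_def fun_eq_iff sum_apply)

lemma Z_Z_iff_rows_columns:
  "x \<in> Z_Z m f s t \<longleftrightarrow> (\<forall>T. (\<lambda>S. x S T) \<in> Z_R m f s) \<and> (\<forall>S. x S \<in> Z_R m f t)"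
  unfolding Z_Z_def Z_R_def koszul_cycles_def koszul_chains_def koszul_d_coefficientwise
  by (auto simp: fun_eq_iff)

text \<open>Not a simp rule: its left-hand side matches every term, so rewriting with it loops.\<close>

lemma transpose_mem_Z_Z_iff:
  "(\<lambda>S T. x T S) \<in> Z_Z m f t s \<longleftrightarrow> x \<in> Z_Z m f s t"
  by (auto simp: Z_Z_iff_rows_columns)

theorem lemma1p2:
  fixes f :: "nat \<Rightarrow> 'a::comm_ring_1" and m s t :: nat
  assumes "noetherian_ring TYPE('a)"
  shows "Z_Z m f s t = (\<lambda>y. \<lambda>S T. y T S) ` Z_Z m f t s"
proof
  show "Z_Z m f s t \<subseteq> (\<lambda>y. \<lambda>S T. y T S) ` Z_Z m f t s"
  proof
    fix x assume "x \<in> Z_Z m f s t"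
    then have "(\<lambda>S T. x T S) \<in> Z_Z m f t s"
      by (rule transpose_mem_Z_Z_iff[THEN iffD2])
    then show "x \<in> (\<lambda>y. \<lambda>S T. y T S) ` Z_Z m f t s"
      by (rule rev_image_eqI) simp
  qed
  show "(\<lambda>y. \<lambda>S T. y T S) ` Z_Z m f t s \<subseteq> Z_Z m f s t"
  proof
    fix x assume "x \<in> (\<lambda>y. \<lambda>S T. y T S) ` Z_Z m f t s"
    then obtain y where "y \<in> Z_Z m f t s" and "x = (\<lambda>S T. y T S)" by blast
    then show "x \<in> Z_Z m f s t"
      using transpose_mem_Z_Z_iff[of y m f s t] by simp
  qed
qed

end
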